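(* Let $d\ge1$ and let $\{N_i(t_i),\ t_i\ge0\}$, $i=1,\dots,d$, be independent one-parameter counting processes. Define $\mathcal{N}(\mathbf{t})=N_1(t_1)+N_2(t_2)+\dots+N_d(t_d)$ for $\mathbf{t}=(t_1,\dots,t_d)\in\mathbb{R}^d_+$. Let $\boldsymbol{\Lambda}=(\lambda_1,\dots,\lambda_d)$ with all $\lambda_i>0$. Then $\{\mathcal{N}(\mathbf{t}),\ \mathbf{t}\in\mathbb{R}^d_+\}$ is a $d$-parameter Poisson process with transition parameter $\boldsymbol{\Lambda}$ if and only if, for each $i=1,\dots,d$, $\{N_i(t_i),\ t_i\ge0\}$ is a Poisson process with transition rate $\lambda_i$.
   Context: A one-parameter counting process is a nonnegative-integer-valued process $N$ with $N(0)=0$ and nondecreasing paths. On $\mathbb{R}^d_+$ use the componentwise partial order: $\mathbf{s}\preceq\mathbf{t}$ iff $s_i\le t_i$ for all $i$; $\mathbf{s}\prec\mathbf{t}$ denotes the strict relation; differences are componentwise and $\boldsymbol{\Lambda}\cdot\mathbf{t}=\sum_i\lambda_it_i$. A multiparameter counting process is a nonnegative-integer-valued random field $\{\mathcal{N}(\mathbf{t}),\mathbf{t}\in\mathbb{R}^d_+\}$ with $\mathcal{N}(\mathbf{0})=0$ and $\mathcal{N}(\mathbf{s})\le\mathcal{N}(\mathbf{t})$ whenever $\mathbf{s}\preceq\mathbf{t}$. A multiparameter (d-parameter) Poisson process (MPP) with transition parameter $\boldsymbol{\Lambda}=(\lambda_1,\dots,\lambda_d)$, $\lambda_i>0$, is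 a multiparameter counting process such that (i) for any $\mathbf{0}=\mathbf{t}^{(0)}\prec\mathbf{t}^{(1)}\prec\dots\prec\mathbf{t}^{(m)}$ the increments $\mathcal{N}(\mathbf{t}^{(k)})-\mathcal{N}(\mathbf{t}^{(k-1)})$, $k=1,\dots,m$, are independent; (ii) for $\mathbf{s}\preceq\mathbf{t}$, $\mathcal{N}(\mathbf{t})-\mathcal{N}(\mathbf{s})$ has the same distribution as $\mathcal{N}(\mathbf{t}-\mathbf{s})$; (iii) for each $\mathbf{t}$, $\mathcal{N}(\mathbf{t})$ is Poisson with mean $\boldsymbol{\Lambda}\cdot\mathbf{t}$. *)

theory Defs
  imports "HOL-Probability.Probability"
begin

(* Points of R^d_+ are represented as functions nat => real; only coordinates i < d matter. *)

definition vle :: "nat \<Rightarrow> (nat \<Rightarrow> real) \<Rightarrow> (nat \<Rightarrow> real) \<Rightarrow> bool" where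
  "vle d s t \<longleftrightarrow> (\<forall>i<d. s i \<le> t i)"

definition vlt :: "nat \<Rightarrow> (nat \<Rightarrow> real) \<Rightarrow> (nat \<Rightarrow> real) \<Rightarrow> bool" where
  "vlt d s t \<longleftrightarrow> vle d s t \<and> \<not> vle d t s"

definition vdot :: "nat \<Rightarrow> (nat \<Rightarrow> real) \<Rightarrow> (nat \<Rightarrow> real) \<Rightarrow> real" where
  "vdot d L t = (\<Sum>i<d. L i * t i)"

definition poisson_rv :: "'a measure \<Rightarrow> ('a \<Rightarrow> nat) \<Rightarrow> real \<Rightarrow> bool" where
  "poisson_rv M X mu \<longleftrightarrow> X \<in> measurable M (count_space UNIV) \<and>
     (\<forall>k::nat. measure M {\<omega> \<in> space M. X \<omega> = k} = exp (- mu) * mu ^ k / fact k)"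

definition counting_process :: "'a measure \<Rightarrow> (real \<Rightarrow> 'a \<Rightarrow> nat) \<Rightarrow> bool" where
  "counting_process M N \<longleftrightarrow> (\<forall>\<omega>\<in>space M. N 0 \<omega> = 0 \<and>
     (\<forall>s t. 0 \<le> s \<longrightarrow> s \<le> t \<longrightarrow> N s \<omega> \<le> N t \<omega>))"

definition poisson_process :: "'a measure \<Rightarrow> real \<Rightarrow> (real \<Rightarrow> 'a \<Rightarrow> nat) \<Rightarrow> bool" where
  "poisson_process M lam N \<longleftrightarrow> counting_process M N \<and>
     (\<forall>(m::nat) (t::nat \<Rightarrow> real). t 0 = 0 \<and> (\<forall>k\<in>{1..m}. t (k - 1) < t k) \<longrightarrow>
        prob_space.indep_vars M (\<lambda>_. count_space UNIV)
          (\<lambda>k \<omega>. N (t k) \<omega> - N (t (k - 1)) \<omega>) {1..m}) \<and>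
     (\<forall>s t. 0 \<le> s \<longrightarrow> s \<le> t \<longrightarrow>
        distr M (count_space UNIV) (\<lambda>\<omega>. N t \<omega> - N s \<omega>) =
        distr M (count_space UNIV) (N (t - s))) \<and>
     (\<forall>t\<ge>0. poisson_rv M (N t) (lam * t))"

definition mcounting_process :: "nat \<Rightarrow> 'a measure \<Rightarrow> ((nat \<Rightarrow> real) \<Rightarrow> 'a \<Rightarrow> nat) \<Rightarrow> bool" where
  "mcounting_process d M X \<longleftrightarrow> (\<forall>\<omega>\<in>space M. X (\<lambda>_. 0) \<omega> = 0 \<and>
     (\<forall>s t. vle d (\<lambda>_. 0) s \<longrightarrow> vle d s t \<longrightarrow> X s \<omega> \<le> X t \<omega>))"

definition mpp :: "nat \<Rightarrow> 'a measure \<Rightarrow> (nat \<Rightarrow> real) \<Rightarrow> ((nat \<Rightarrow> real) \<Rightarrow> 'a \<Rightarrow> nat) \<Rightarrow> bool" where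
  "mpp d M L X \<longleftrightarrow> mcounting_process d M X \<and>
     (\<forall>(m::nat) (t::nat \<Rightarrow> nat \<Rightarrow> real). t 0 = (\<lambda>_. 0) \<and> (\<forall>k\<in>{1..m}. vlt d (t (k - 1)) (t k)) \<longrightarrow>
        prob_space.indep_vars M (\<lambda>_. count_space UNIV)
          (\<lambda>k \<omega>. X (t k) \<omega> - X (t (k - 1)) \<omega>) {1..m}) \<and>
     (\<forall>s t. vle d (\<lambda>_. 0) s \<longrightarrow> vle d s t \<longrightarrow>
        distr M (count_space UNIV) (\<lambda>\<omega>. X t \<omega> - X s \<omega>) =
        distr M (count_space UNIV) (X (\<lambda>i. t i - s i))) \<and>
     (\<forall>t. vle d (\<lambda>_. 0) t \<longrightarrow> poisson_rv M (X t) (vdot d L t))"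

end

theory Submission
  imports Defs
begin

(*
  On the i-th coordinate axis the sum field reduces to N_i, because the other components
  vanish at time 0; and the restriction of a multiparameter Poisson process to an axis is a
  Poisson process with rate lambda_i.

  Conversely, let the N_i be independent Poisson processes. For s <= t the increment of the
  sum field is a sum of independent Poisson variables, hence Poisson with mean
  Lambda . (t - s). This gives the marginals, and also stationarity, because a Poisson law
  is determined by its mean. Along a chain t(0) < ... < t(m) the coordinate chains are only
  nondecreasing. A repeated time contributes a zero increment, so each N_i still has
  independent increments along its coordinate chain. With the independence of the
  processes, the whole array of coordinate increments is then independent, and the
  increments of the sum field are its column sums.
*)

section \<open>Independence of discrete random variables\<close>

context prob_space
begin

lemma indep_vars_cong_space:
  assumes "indep_vars M' X I" "\<And>i \<omega>. i \<in> I \<Longrightarrow> \<omega> \<in> space M \<Longrightarrow> X i \<omega> = Y i \<omega>"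
  shows "indep_vars M' Y I"
proof -
  have "X i -` A \<inter> space M = Y i -` A \<inter> space M" if "i \<in> I" for i A
    using assms(2)[OF that] by auto
  moreover have "X i \<in> measurable M (M' i) \<longleftrightarrow> Y i \<in> measurable M (M' i)" if "i \<in> I" for i
    using assms(2)[OF that] by (intro measurable_cong) auto
  ultimately show ?thesis
    using assms(1) unfolding indep_vars_def2 by (simp cong: indep_sets_cong)
qed

lemma indep_vars_count_space_iff:
  assumes K: "finite K" and X: "\<And>k. k \<in> K \<Longrightarrow> X k \<in> measurable M (count_space UNIV)"
  shows "indep_vars (\<lambda>_. count_space UNIV) X K \<longleftrightarrow>
    (\<forall>A. prob {\<omega>\<in>space M. \<forall>k\<in>K. X k \<omega> \<in> A k} = (\<Prod>k\<in>K. prob {\<omega>\<in>space M. X k \<omega> \<in> A k}))"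
proof (cases "K = {}")
  case True
  then show ?thesis by (simp add: indep_vars_def indep_sets_def prob_space)
next
  case False
  have "indep_vars (\<lambda>_. count_space UNIV) X K \<longleftrightarrow>
    (\<forall>A\<in>(\<Pi> k\<in>K. UNIV). prob (\<Inter>k\<in>K. X k -` A k \<inter> space M) = (\<Prod>k\<in>K. prob (X k -` A k \<inter> space M)))"
    by (rule indep_vars_finite[OF False K]) (auto simp: X Int_stable_def)
  moreover have "(\<Inter>k\<in>K. X k -` A k \<inter> space M) = {\<omega>\<in>space M. \<forall>k\<in>K. X k \<omega> \<in> A k}" for A
    using False by auto
  moreover have "X k -` A \<inter> space M = {\<omega>\<in>space M. X k \<omega> \<in> A}" for k A
    by auto
  ultimately show ?thesis by simp
qed

lemma indep_vars_count_spaceD: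
  assumes "indep_vars (\<lambda>_. count_space UNIV) X K" "finite K"
  shows "prob {\<omega>\<in>space M. \<forall>k\<in>K. X k \<omega> \<in> A k} = (\<Prod>k\<in>K. prob {\<omega>\<in>space M. X k \<omega> \<in> A k})"
proof -
  have "X k \<in> measurable M (count_space UNIV)" if "k \<in> K" for k
    using assms(1) that by (auto simp: indep_vars_def)
  then show ?thesis
    using assms indep_vars_count_space_iff by blast
qed

lemma indep_vars_count_space_reindex:
  assumes "inj_on \<sigma> K" "finite K" "indep_vars (\<lambda>_. count_space UNIV) (\<lambda>k. X (\<sigma> k)) K"
  shows "indep_vars (\<lambda>_. count_space UNIV) X (\<sigma> ` K)"
proof -
  have X: "X j \<in> measurable M (count_space UNIV)" if "j \<in> \<sigma> ` K" for j
    using assms(3) that by (auto simp: indep_vars_def)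
  have "prob {\<omega>\<in>space M. \<forall>j\<in>\<sigma> ` K. X j \<omega> \<in> A j} = (\<Prod>j\<in>\<sigma> ` K. prob {\<omega>\<in>space M. X j \<omega> \<in> A j})"
    for A
    using indep_vars_count_spaceD[OF assms(3,2), of "\<lambda>k. A (\<sigma> k)"] assms(1)
    by (simp add: prod.reindex)
  with assms(2) X show ?thesis
    by (subst indep_vars_count_space_iff) auto
qed

lemma indep_vars_count_space_insert_const:
  assumes indep: "indep_vars (\<lambda>_. count_space UNIV) X K" and K: "finite K"
    and const: "\<And>\<omega>. \<omega> \<in> space M \<Longrightarrow> X j \<omega> = c"
  shows "indep_vars (\<lambda>_. count_space UNIV) X (insert j K)"
proof (cases "j \<in> K")
  case False
  have X: "X k \<in> measurable M (count_space UNIV)" if "k \<in> insert j K" for k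
    using indep const that by (auto simp: indep_vars_def intro: measurable_cong[THEN iffD2])
  have "prob {\<omega>\<in>space M. \<forall>k\<in>insert j K. X k \<omega> \<in> A k}
      = (\<Prod>k\<in>insert j K. prob {\<omega>\<in>space M. X k \<omega> \<in> A k})" for A
  proof -
    have "{\<omega>\<in>space M. \<forall>k\<in>insert j K. X k \<omega> \<in> A k}
        = (if c \<in> A j then {\<omega>\<in>space M. \<forall>k\<in>K. X k \<omega> \<in> A k} else {})"
      "{\<omega>\<in>space M. X j \<omega> \<in> A j} = (if c \<in> A j then space M else {})"
      using const by auto
    then show ?thesis
      using False K by (simp add: indep_vars_count_spaceD[OF indep K] prob_space)
  qed
  with K X show ?thesis
    by (subst indep_vars_count_space_iff) auto
qed (use indep in \<open>simp add: insert_absorb\<close>)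

lemma indep_vars_product_index:
  fixes Y :: "'i \<Rightarrow> 'a \<Rightarrow> 'b" and F :: "'i \<Rightarrow> 'k \<Rightarrow> 'b \<Rightarrow> 'c"
  assumes Y: "indep_vars M' Y I" and I: "finite I" and K: "finite K"
    and F: "\<And>i k. i \<in> I \<Longrightarrow> k \<in> K \<Longrightarrow> F i k \<in> measurable (M' i) (count_space UNIV)"
    and rows: "\<And>i. i \<in> I \<Longrightarrow> indep_vars (\<lambda>_. count_space UNIV) (\<lambda>k \<omega>. F i k (Y i \<omega>)) K"
  shows "indep_vars (\<lambda>_. count_space UNIV) (\<lambda>p \<omega>. F (fst p) (snd p) (Y (fst p) \<omega>)) (I \<times> K)"
proof -
  have Yi: "Y i \<in> measurable M (M' i)" if "i \<in> I" for i
    using Y that by (auto simp: indep_vars_def)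
  have "prob {\<omega>\<in>space M. \<forall>p\<in>I \<times> K. F (fst p) (snd p) (Y (fst p) \<omega>) \<in> A p}
      = (\<Prod>p\<in>I \<times> K. prob {\<omega>\<in>space M. F (fst p) (snd p) (Y (fst p) \<omega>) \<in> A p})" for A
  proof (cases "I = {}")
    case True
    then show ?thesis by (simp add: prob_space)
  next
    case False
    define B where "B i = {y \<in> space (M' i). \<forall>k\<in>K. F i k y \<in> A (i, k)}" for i
    have B: "B i \<in> sets (M' i)" if "i \<in> I" for i
    proof -
      have "{y \<in> space (M' i). F i k y \<in> A (i, k)} = F i k -` A (i, k) \<inter> space (M' i)" for k
        by auto
      then show ?thesis
        unfolding B_def using K F[OF that] by (intro sets.sets_Collect_finite_All) auto
    qed
    have "prob {\<omega>\<in>space M. \<forall>p\<in>I \<times> K. F (fst p) (snd p) (Y (fst p) \<omega>) \<in> A p}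
        = prob (\<Inter>i\<in>I. Y i -` B i \<inter> space M)"
      using False by (intro arg_cong[where f=prob]) (auto simp: B_def measurable_space[OF Yi])
    also have "\<dots> = (\<Prod>i\<in>I. prob (Y i -` B i \<inter> space M))"
      using B by (intro indep_varsD[OF Y False I]) auto
    also have "\<dots> = (\<Prod>i\<in>I. prob {\<omega>\<in>space M. \<forall>k\<in>K. F i k (Y i \<omega>) \<in> A (i, k)})"
      by (intro prod.cong refl arg_cong[where f=prob]) (auto simp: B_def measurable_space[OF Yi])
    also have "\<dots> = (\<Prod>i\<in>I. \<Prod>k\<in>K. prob {\<omega>\<in>space M. F i k (Y i \<omega>) \<in> A (i, k)})"
      by (intro prod.cong refl indep_vars_count_spaceD[OF rows K])
    finally show ?thesis
      by (simp add: prod.cartesian_product case_prod_beta')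
  qed
  moreover have "(\<lambda>\<omega>. F (fst p) (snd p) (Y (fst p) \<omega>)) \<in> measurable M (count_space UNIV)"
    if "p \<in> I \<times> K" for p
    using that F Yi by (auto intro: measurable_compose)
  ultimately show ?thesis
    using I K by (subst indep_vars_count_space_iff) auto
qed

lemma indep_vars_column_sums:
  fixes X :: "'i \<Rightarrow> 'k \<Rightarrow> 'a \<Rightarrow> nat"
  assumes "indep_vars (\<lambda>_. count_space UNIV) (\<lambda>p. X (fst p) (snd p)) (I \<times> K)" "finite I"
  shows "indep_vars (\<lambda>_. count_space UNIV) (\<lambda>k \<omega>. \<Sum>i\<in>I. X i k \<omega>) K"
proof -
  have "indep_vars (\<lambda>k. Pi\<^sub>M (I \<times> {k}) (\<lambda>_. count_space UNIV))
      (\<lambda>k \<omega>. restrict (\<lambda>p. X (fst p) (snd p) \<omega>) (I \<times> {k})) K"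
    by (rule indep_vars_restrict[OF assms(1)]) (auto simp: disjoint_family_on_def)
  then have "indep_vars (\<lambda>_. count_space UNIV)
      (\<lambda>k \<omega>. (\<lambda>x. \<Sum>i\<in>I. x (i, k)) (restrict (\<lambda>p. X (fst p) (snd p) \<omega>) (I \<times> {k}))) K"
    by (rule indep_vars_compose2) (use assms(2) in measurable)
  then show ?thesis
    by (rule indep_vars_cong_space) simp
qed

lemma indep_var_sum_insert:
  fixes Z :: "'i \<Rightarrow> 'a \<Rightarrow> nat"
  assumes "indep_vars (\<lambda>_. count_space UNIV) Z (insert j F)" "finite F" "j \<notin> F"
  shows "indep_var (count_space UNIV) (Z j) (count_space UNIV) (\<lambda>\<omega>. \<Sum>i\<in>F. Z i \<omega>)"
proof -
  have "indep_var
      (count_space UNIV) ((\<lambda>f. f j) \<circ> (\<lambda>\<omega>. restrict (\<lambda>i. Z i \<omega>) {j}))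
      (count_space UNIV) ((\<lambda>f. \<Sum>i\<in>F. f i) \<circ> (\<lambda>\<omega>. restrict (\<lambda>i. Z i \<omega>) F))"
    using assms by (intro indep_var_compose[OF indep_var_restrict[OF assms(1)]]) auto
  moreover have "(\<lambda>f. f j) \<circ> (\<lambda>\<omega>. restrict (\<lambda>i. Z i \<omega>) {j}) = Z j"
    by auto
  moreover have "(\<lambda>f. \<Sum>i\<in>F. f i) \<circ> (\<lambda>\<omega>. restrict (\<lambda>i. Z i \<omega>) F) = (\<lambda>\<omega>. \<Sum>i\<in>F. Z i \<omega>)"
    by (auto intro!: sum.cong)
  ultimately show ?thesis
    by simp
qed

end

section \<open>Poisson random variables\<close>

lemma poisson_rv_cong:
  assumes "poisson_rv M X mu" "\<And>\<omega>. \<omega> \<in> space M \<Longrightarrow> X \<omega> = Y \<omega>"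
  shows "poisson_rv M Y mu"
proof -
  have "{\<omega> \<in> space M. X \<omega> = k} = {\<omega> \<in> space M. Y \<omega> = k}" for k
    using assms(2) by auto
  moreover have "X \<in> measurable M (count_space UNIV) \<longleftrightarrow> Y \<in> measurable M (count_space UNIV)"
    using assms(2) by (intro measurable_cong) auto
  ultimately show ?thesis
    using assms(1) unfolding poisson_rv_def by simp
qed

lemma poisson_density_convolution:
  fixes a b :: real
  shows "(\<Sum>k\<le>n. (exp (- a) * a ^ k / fact k) * (exp (- b) * b ^ (n - k) / fact (n - k)))
         = exp (- (a + b)) * (a + b) ^ n / fact n"
proof -
  have "exp (- (a + b)) * (a + b) ^ n / fact n
      = (\<Sum>k\<le>n. exp (- (a + b)) / fact n * (of_nat (n choose k) * a ^ k * b ^ (n - k)))"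
    by (simp add: binomial_ring sum_distrib_left sum_divide_distrib)
  also have "\<dots> = (\<Sum>k\<le>n. (exp (- a) * a ^ k / fact k) * (exp (- b) * b ^ (n - k) / fact (n - k)))"
    by (intro sum.cong refl) (simp add: binomial_fact exp_add[symmetric] field_simps)
  finally show ?thesis by simp
qed

context prob_space
begin

lemma prob_eq_distr_count_space:
  assumes "X \<in> measurable M (count_space UNIV)"
  shows "prob {\<omega>\<in>space M. X \<omega> = k} = measure (distr M (count_space UNIV) X) {k}"
  using assms by (subst measure_distr) (auto intro!: arg_cong[where f=prob])

lemma distr_count_space_eqI:
  fixes X Y :: "'a \<Rightarrow> 'b::countable"
  assumes X: "X \<in> measurable M (count_space UNIV)" and Y: "Y \<in> measurable M (count_space UNIV)"
    and eq: "\<And>k. prob {\<omega>\<in>space M. X \<omega> = k} = prob {\<omega>\<in>space M. Y \<omega> = k}"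
  shows "distr M (count_space UNIV) X = distr M (count_space UNIV) Y"
proof (rule measure_eqI_countable[where A=UNIV])
  fix k
  have "emeasure (distr M (count_space UNIV) X) {k} = prob {\<omega>\<in>space M. X \<omega> = k}"
    using X by (subst emeasure_distr) (auto simp: emeasure_eq_measure intro!: arg_cong[where f=prob])
  moreover have "emeasure (distr M (count_space UNIV) Y) {k} = prob {\<omega>\<in>space M. Y \<omega> = k}"
    using Y by (subst emeasure_distr) (auto simp: emeasure_eq_measure intro!: arg_cong[where f=prob])
  ultimately show "emeasure (distr M (count_space UNIV) X) {k} = emeasure (distr M (count_space UNIV) Y) {k}"
    by (simp add: eq)
qed auto

lemma poisson_rv_distr_eq:
  assumes "poisson_rv M X mu" "poisson_rv M Y mu"
  shows "distr M (count_space UNIV) X = distr M (count_space UNIV) Y"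
  using assms unfolding poisson_rv_def by (intro distr_count_space_eqI) auto

lemma poisson_rv_same_distr:
  assumes "poisson_rv M Y mu" "X \<in> measurable M (count_space UNIV)"
    and "distr M (count_space UNIV) X = distr M (count_space UNIV) Y"
  shows "poisson_rv M X mu"
proof -
  have "Y \<in> measurable M (count_space UNIV)"
    using assms(1) unfolding poisson_rv_def by auto
  then have "prob {\<omega>\<in>space M. X \<omega> = k} = prob {\<omega>\<in>space M. Y \<omega> = k}" for k
    using assms(2,3) by (simp add: prob_eq_distr_count_space)
  then show ?thesis
    using assms(1,2) unfolding poisson_rv_def by simp
qed

lemma poisson_rv_add:
  assumes X: "poisson_rv M X a" and Y: "poisson_rv M Y b"
    and indep: "indep_var (count_space UNIV) X (count_space UNIV) Y"
  shows "poisson_rv M (\<lambda>\<omega>. X \<omega> + Y \<omega>) (a + b)"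
  unfolding poisson_rv_def
proof (intro conjI allI)
  have [measurable]: "X \<in> measurable M (count_space UNIV)" "Y \<in> measurable M (count_space UNIV)"
    using X Y unfolding poisson_rv_def by auto
  show "(\<lambda>\<omega>. X \<omega> + Y \<omega>) \<in> measurable M (count_space UNIV)"
    by measurable
  fix n :: nat
  have "{\<omega>\<in>space M. X \<omega> + Y \<omega> = n} = (\<Union>k\<le>n. {\<omega>\<in>space M. X \<omega> = k \<and> Y \<omega> = n - k})"
    by auto
  then have "prob {\<omega>\<in>space M. X \<omega> + Y \<omega> = n} = (\<Sum>k\<le>n. prob {\<omega>\<in>space M. X \<omega> = k \<and> Y \<omega> = n - k})"
    by (simp, intro finite_measure_finite_Union) (auto simp: disjoint_family_on_def)
  also have "\<dots> = (\<Sum>k\<le>n. prob {\<omega>\<in>space M. X \<omega> = k} * prob {\<omega>\<in>space M. Y \<omega> = n - k})"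
    using prob_indep_random_variable[OF indep, of "{_}" "{_}"] by simp
  also have "\<dots> = (\<Sum>k\<le>n. (exp (- a) * a ^ k / fact k) * (exp (- b) * b ^ (n - k) / fact (n - k)))"
    using X Y by (simp add: poisson_rv_def)
  also have "\<dots> = exp (- (a + b)) * (a + b) ^ n / fact n"
    by (rule poisson_density_convolution)
  finally show "prob {\<omega>\<in>space M. X \<omega> + Y \<omega> = n} = exp (- (a + b)) * (a + b) ^ n / fact n" .
qed

lemma poisson_rv_sum:
  fixes Z :: "'i \<Rightarrow> 'a \<Rightarrow> nat"
  assumes "finite F" "indep_vars (\<lambda>_. count_space UNIV) Z F"
    and "\<And>i. i \<in> F \<Longrightarrow> poisson_rv M (Z i) (mu i)"
  shows "poisson_rv M (\<lambda>\<omega>. \<Sum>i\<in>F. Z i \<omega>) (\<Sum>i\<in>F. mu i)"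
  using assms
proof (induction F rule: finite_induct)
  case empty
  have "prob {\<omega> \<in> space M. 0 = k} = exp (- 0) * 0 ^ k / fact k" for k :: nat
    by (cases k) (auto simp: prob_space)
  then show ?case
    unfolding poisson_rv_def by simp
next
  case (insert j F)
  have "poisson_rv M (\<lambda>\<omega>. \<Sum>i\<in>F. Z i \<omega>) (\<Sum>i\<in>F. mu i)"
    using insert by (intro insert.IH indep_vars_subset[OF insert.prems(1)]) auto
  then have "poisson_rv M (\<lambda>\<omega>. Z j \<omega> + (\<Sum>i\<in>F. Z i \<omega>)) (mu j + (\<Sum>i\<in>F. mu i))"
    using insert by (intro poisson_rv_add indep_var_sum_insert) auto
  then show ?case
    using insert by simp
qed

end

section \<open>Poisson processes\<close>

lemma bij_betw_skip_index:
  assumes "j \<in> {1..Suc m}"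
  shows "bij_betw (\<lambda>k. if k < j then k else Suc k) {1..m} ({1..Suc m} - {j})"
proof (rule bij_betw_imageI)
  show "inj_on (\<lambda>k. if k < j then k else Suc k) {1..m}"
    by (auto simp: inj_on_def split: if_splits)
  show "(\<lambda>k. if k < j then k else Suc k) ` {1..m} = {1..Suc m} - {j}"
  proof (intro equalityI subsetI)
    fix x assume x: "x \<in> {1..Suc m} - {j}"
    show "x \<in> (\<lambda>k. if k < j then k else Suc k) ` {1..m}"
    proof (cases "x < j")
      case True
      with x assms show ?thesis by (auto simp: image_iff intro!: bexI[of _ x])
    next
      case False
      with x assms show ?thesis by (auto simp: image_iff intro!: bexI[of _ "x - 1"])
    qed
  qed auto
qed

definition axis_point :: "nat \<Rightarrow> real \<Rightarrow> nat \<Rightarrow> real" where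
  "axis_point i r = (\<lambda>j. if j = i then r else 0)"

lemma axis_point_zero: "axis_point i 0 = (\<lambda>_. 0)"
  by (simp add: axis_point_def fun_eq_iff)

lemma axis_point_diff: "(\<lambda>j. axis_point i t j - axis_point i s j) = axis_point i (t - s)"
  by (auto simp: axis_point_def)

lemma vle_axis_point: "i < d \<Longrightarrow> vle d (axis_point i r) (axis_point i s) \<longleftrightarrow> r \<le> s"
  by (auto simp: vle_def axis_point_def)

lemma vle_zero_axis_point: "i < d \<Longrightarrow> vle d (\<lambda>_. 0) (axis_point i r) \<longleftrightarrow> 0 \<le> r"
  by (auto simp: vle_def axis_point_def)

lemma vlt_axis_point: "i < d \<Longrightarrow> vlt d (axis_point i r) (axis_point i s) \<longleftrightarrow> r < s"
  by (auto simp: vlt_def vle_axis_point)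

lemma vdot_axis_point:
  assumes "i < d"
  shows "vdot d L (axis_point i t) = L i * t"
proof -
  have "vdot d L (axis_point i t) = (\<Sum>j<d. if j = i then L i * t else 0)"
    unfolding vdot_def axis_point_def by (intro sum.cong) auto
  with assms show ?thesis
    by simp
qed

lemma sum_axis_point:
  fixes f :: "nat \<Rightarrow> real \<Rightarrow> 'b::comm_monoid_add"
  assumes "i < d" "\<And>j. j < d \<Longrightarrow> f j 0 = 0"
  shows "(\<Sum>j<d. f j (axis_point i r j)) = f i r"
proof -
  have "(\<Sum>j<d. f j (axis_point i r j)) = (\<Sum>j<d. if j = i then f i r else 0)"
    using assms(2) unfolding axis_point_def by (intro sum.cong) auto
  with assms(1) show ?thesis
    by simp
qed

context prob_space
begin

lemma poisson_process_increment:
  assumes "poisson_process M lam N" "0 \<le> s" "s \<le> t"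
  shows "poisson_rv M (\<lambda>\<omega>. N t \<omega> - N s \<omega>) (lam * (t - s))"
proof (rule poisson_rv_same_distr)
  show "poisson_rv M (N (t - s)) (lam * (t - s))"
    using assms unfolding poisson_process_def by simp
  have [measurable]: "N t \<in> measurable M (count_space UNIV)" "N s \<in> measurable M (count_space UNIV)"
    using assms unfolding poisson_process_def poisson_rv_def by auto
  show "(\<lambda>\<omega>. N t \<omega> - N s \<omega>) \<in> measurable M (count_space UNIV)"
    by measurable
  show "distr M (count_space UNIV) (\<lambda>\<omega>. N t \<omega> - N s \<omega>) = distr M (count_space UNIV) (N (t - s))"
    using assms unfolding poisson_process_def by blast
qed

lemma poisson_process_indep_increments_mono:
  fixes t :: "nat \<Rightarrow> real"
  assumes "poisson_process M lam N" "t 0 = 0" "\<forall>k\<in>{1..m}. t (k - 1) \<le> t k"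
  shows "indep_vars (\<lambda>_. count_space UNIV) (\<lambda>k \<omega>. N (t k) \<omega> - N (t (k - 1)) \<omega>) {1..m}"
  using assms(2,3)
proof (induction m arbitrary: t)
  case 0
  then show ?case by (simp add: indep_vars_def indep_sets_def)
next
  case (Suc m)
  show ?case
  proof (cases "\<forall>k\<in>{1..Suc m}. t (k - 1) < t k")
    case True
    then show ?thesis
      using assms(1) Suc.prems unfolding poisson_process_def by blast
  next
    case False
    \<comment> \<open>A repeated time \<open>t (j - 1) = t j\<close> gives the zero increment; skipping the index \<open>j\<close>
      leaves a shorter chain \<open>t \<circ> \<sigma>\<close> with the same other increments.\<close>
    then obtain j where j: "j \<in> {1..Suc m}" "t (j - 1) = t j"
      using Suc.prems(2) by fastforce
    define \<sigma> where "\<sigma> k = (if k < j then k else Suc k)" for k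
    have \<sigma>: "bij_betw \<sigma> {1..m} ({1..Suc m} - {j})"
      unfolding \<sigma>_def using j(1) by (rule bij_betw_skip_index)
    have \<sigma>_pred: "t (\<sigma> (k - 1)) = t (\<sigma> k - 1)" if "k \<in> {1..m}" for k
      using that j unfolding \<sigma>_def by (cases "k < j"; cases "k = j") auto
    have "indep_vars (\<lambda>_. count_space UNIV)
        (\<lambda>k \<omega>. N ((t \<circ> \<sigma>) k) \<omega> - N ((t \<circ> \<sigma>) (k - 1)) \<omega>) {1..m}"
    proof (rule Suc.IH)
      show "(t \<circ> \<sigma>) 0 = 0"
        using j Suc.prems(1) by (simp add: \<sigma>_def)
      show "\<forall>k\<in>{1..m}. (t \<circ> \<sigma>) (k - 1) \<le> (t \<circ> \<sigma>) k"
        using Suc.prems(2) \<sigma>_pred bij_betw_apply[OF \<sigma>] by auto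
    qed
    then have "indep_vars (\<lambda>_. count_space UNIV)
        (\<lambda>k \<omega>. N (t (\<sigma> k)) \<omega> - N (t (\<sigma> k - 1)) \<omega>) {1..m}"
      by (rule indep_vars_cong_space) (use \<sigma>_pred in auto)
    then have "indep_vars (\<lambda>_. count_space UNIV)
        (\<lambda>k \<omega>. N (t k) \<omega> - N (t (k - 1)) \<omega>) ({1..Suc m} - {j})"
      unfolding bij_betw_imp_surj_on[OF \<sigma>, symmetric]
      by (intro indep_vars_count_space_reindex bij_betw_imp_inj_on[OF \<sigma>]) auto
    then have "indep_vars (\<lambda>_. count_space UNIV)
        (\<lambda>k \<omega>. N (t k) \<omega> - N (t (k - 1)) \<omega>) (insert j ({1..Suc m} - {j}))"
      by (rule indep_vars_count_space_insert_const[where c=0]) (use j(2) in auto)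
    then show ?thesis
      using j by (simp add: insert_absorb)
  qed
qed

lemma poisson_process_cong:
  assumes "poisson_process M lam N" "\<And>t \<omega>. \<omega> \<in> space M \<Longrightarrow> N t \<omega> = N' t \<omega>"
  shows "poisson_process M lam N'"
  unfolding poisson_process_def
proof (intro conjI allI impI)
  show "counting_process M N'"
    using assms unfolding poisson_process_def counting_process_def by simp
next
  fix m :: nat and t :: "nat \<Rightarrow> real"
  assume "t 0 = 0 \<and> (\<forall>k\<in>{1..m}. t (k - 1) < t k)"
  then have "indep_vars (\<lambda>_. count_space UNIV) (\<lambda>k \<omega>. N (t k) \<omega> - N (t (k - 1)) \<omega>) {1..m}"
    using assms(1) unfolding poisson_process_def by blast
  then show "indep_vars (\<lambda>_. count_space UNIV) (\<lambda>k \<omega>. N' (t k) \<omega> - N' (t (k - 1)) \<omega>) {1..m}"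
    by (rule indep_vars_cong_space) (simp add: assms(2))
next
  fix s t :: real
  assume "0 \<le> s" "s \<le> t"
  then have "distr M (count_space UNIV) (\<lambda>\<omega>. N t \<omega> - N s \<omega>) = distr M (count_space UNIV) (N (t - s))"
    using assms(1) unfolding poisson_process_def by blast
  moreover have "distr M (count_space UNIV) (\<lambda>\<omega>. N t \<omega> - N s \<omega>) = distr M (count_space UNIV) (\<lambda>\<omega>. N' t \<omega> - N' s \<omega>)"
    "distr M (count_space UNIV) (N (t - s)) = distr M (count_space UNIV) (N' (t - s))"
    by (rule distr_cong; simp add: assms(2))+
  ultimately show "distr M (count_space UNIV) (\<lambda>\<omega>. N' t \<omega> - N' s \<omega>) = distr M (count_space UNIV) (N' (t - s))"
    by simp
next
  fix t :: real
  assume "0 \<le> t"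
  then have "poisson_rv M (N t) (lam * t)"
    using assms(1) unfolding poisson_process_def by blast
  then show "poisson_rv M (N' t) (lam * t)"
    by (rule poisson_rv_cong) (simp add: assms(2))
qed

lemma mpp_axis_poisson_process:
  fixes X :: "(nat \<Rightarrow> real) \<Rightarrow> 'a \<Rightarrow> nat"
  assumes mpp: "mpp d M L X" and i: "i < d"
  shows "poisson_process M (L i) (\<lambda>r. X (axis_point i r))"
  unfolding poisson_process_def
proof (intro conjI allI impI)
  show "counting_process M (\<lambda>r. X (axis_point i r))"
    using mpp i unfolding mpp_def mcounting_process_def counting_process_def
    by (simp add: axis_point_zero vle_zero_axis_point vle_axis_point)
next
  fix m :: nat and t :: "nat \<Rightarrow> real"
  assume "t 0 = 0 \<and> (\<forall>k\<in>{1..m}. t (k - 1) < t k)"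
  with i have "(axis_point i \<circ> t) 0 = (\<lambda>_. 0) \<and>
      (\<forall>k\<in>{1..m}. vlt d ((axis_point i \<circ> t) (k - 1)) ((axis_point i \<circ> t) k))"
    by (simp add: axis_point_zero vlt_axis_point)
  then have "indep_vars (\<lambda>_. count_space UNIV)
      (\<lambda>k \<omega>. X ((axis_point i \<circ> t) k) \<omega> - X ((axis_point i \<circ> t) (k - 1)) \<omega>) {1..m}"
    using mpp unfolding mpp_def by blast
  then show "indep_vars (\<lambda>_. count_space UNIV)
      (\<lambda>k \<omega>. X (axis_point i (t k)) \<omega> - X (axis_point i (t (k - 1))) \<omega>) {1..m}"
    by simp
next
  fix s t :: real
  assume "0 \<le> s" "s \<le> t"
  with i have "vle d (\<lambda>_. 0) (axis_point i s)" "vle d (axis_point i s) (axis_point i t)"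
    by (simp_all add: vle_zero_axis_point vle_axis_point)
  then have "distr M (count_space UNIV) (\<lambda>\<omega>. X (axis_point i t) \<omega> - X (axis_point i s) \<omega>)
      = distr M (count_space UNIV) (X (\<lambda>j. axis_point i t j - axis_point i s j))"
    using mpp unfolding mpp_def by blast
  then show "distr M (count_space UNIV) (\<lambda>\<omega>. X (axis_point i t) \<omega> - X (axis_point i s) \<omega>)
      = distr M (count_space UNIV) (X (axis_point i (t - s)))"
    by (simp only: axis_point_diff)
next
  fix t :: real
  assume "0 \<le> t"
  with i have "vle d (\<lambda>_. 0) (axis_point i t)"
    by (simp add: vle_zero_axis_point)
  then show "poisson_rv M (X (axis_point i t)) (L i * t)"
    using mpp i unfolding mpp_def by (metis vdot_axis_point)
qed

context
  fixes d :: nat and N :: "nat \<Rightarrow> real \<Rightarrow> 'a \<Rightarrow> nat" and L :: "nat \<Rightarrow> real"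
  assumes indep_processes: "indep_vars (\<lambda>_. Pi\<^sub>M {0..} (\<lambda>_. count_space UNIV))
      (\<lambda>i \<omega>. restrict (\<lambda>t. N i t \<omega>) {0..}) {..<d}"
    and poisson_processes: "\<And>i. i < d \<Longrightarrow> poisson_process M (L i) (N i)"
begin

lemma component_mono:
  assumes "\<omega> \<in> space M" "i < d" "0 \<le> s" "s \<le> t"
  shows "N i s \<omega> \<le> N i t \<omega>"
  using assms poisson_processes unfolding poisson_process_def counting_process_def by blast

lemma component_zero:
  assumes "\<omega> \<in> space M" "i < d"
  shows "N i 0 \<omega> = 0"
  using assms poisson_processes unfolding poisson_process_def counting_process_def by blast

lemma sum_process_diff:
  assumes "\<omega> \<in> space M" "\<And>i. i < d \<Longrightarrow> 0 \<le> s i" "\<And>i. i < d \<Longrightarrow> s i \<le> t i"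
  shows "(\<Sum>i<d. N i (t i) \<omega>) - (\<Sum>i<d. N i (s i) \<omega>) = (\<Sum>i<d. N i (t i) \<omega> - N i (s i) \<omega>)"
  using assms by (intro sum_subtractf_nat[symmetric] component_mono) auto

lemma sum_process_increment_poisson:
  assumes s: "\<And>i. i < d \<Longrightarrow> 0 \<le> s i" and st: "\<And>i. i < d \<Longrightarrow> s i \<le> t i"
  shows "poisson_rv M (\<lambda>\<omega>. \<Sum>i<d. N i (t i) \<omega> - N i (s i) \<omega>) (\<Sum>i<d. L i * (t i - s i))"
proof (rule poisson_rv_sum)
  have "indep_vars (\<lambda>_. count_space UNIV)
      (\<lambda>i \<omega>. (\<lambda>x. x (t i) - x (s i)) (restrict (\<lambda>r. N i r \<omega>) {0..})) {..<d}"
  proof (rule indep_vars_compose2[OF indep_processes])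
    fix i assume "i \<in> {..<d}"
    then have [measurable]: "s i \<in> {0..}" "t i \<in> {0..}"
      using s st by (auto intro: order_trans)
    show "(\<lambda>x. x (t i) - x (s i))
        \<in> measurable (Pi\<^sub>M {0..} (\<lambda>_. count_space (UNIV :: nat set))) (count_space UNIV)"
      by measurable
  qed
  then show "indep_vars (\<lambda>_. count_space UNIV) (\<lambda>i \<omega>. N i (t i) \<omega> - N i (s i) \<omega>) {..<d}"
    by (rule indep_vars_cong_space) (use s st in \<open>auto intro: order_trans\<close>)
  show "poisson_rv M (\<lambda>\<omega>. N i (t i) \<omega> - N i (s i) \<omega>) (L i * (t i - s i))" if "i \<in> {..<d}" for i
    using that s st by (intro poisson_process_increment poisson_processes) auto
qed simp

lemma sum_process_poisson:
  assumes "\<And>i. i < d \<Longrightarrow> 0 \<le> t i"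
  shows "poisson_rv M (\<lambda>\<omega>. \<Sum>i<d. N i (t i) \<omega>) (vdot d L t)"
proof -
  have "poisson_rv M (\<lambda>\<omega>. \<Sum>i<d. N i (t i) \<omega> - N i 0 \<omega>) (\<Sum>i<d. L i * t i)"
    using assms sum_process_increment_poisson[of "\<lambda>_. 0" t] by simp
  then show ?thesis
    unfolding vdot_def by (rule poisson_rv_cong) (simp add: component_zero)
qed

lemma sum_process_indep_increments:
  fixes t :: "nat \<Rightarrow> nat \<Rightarrow> real"
  assumes t0: "t 0 = (\<lambda>_. 0)" and chain: "\<And>k. k \<in> {1..m} \<Longrightarrow> vle d (t (k - 1)) (t k)"
  shows "indep_vars (\<lambda>_. count_space UNIV)
    (\<lambda>k \<omega>. (\<Sum>i<d. N i (t k i) \<omega>) - (\<Sum>i<d. N i (t (k - 1) i) \<omega>)) {1..m}"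
proof -
  have step: "t (k - 1) i \<le> t k i" if "k \<in> {1..m}" "i < d" for k i
    using chain that unfolding vle_def by blast
  have nonneg: "0 \<le> t k i" if "k \<le> m" "i < d" for k i
    using that
  proof (induction k)
    case 0
    then show ?case using t0 by simp
  next
    case (Suc k)
    then show ?case using step[of "Suc k" i] by simp
  qed
  define F where "F i k x = x (t k i) - x (t (k - 1) i)" for i k and x :: "real \<Rightarrow> nat"
  have "indep_vars (\<lambda>_. count_space UNIV)
      (\<lambda>p \<omega>. F (fst p) (snd p) (restrict (\<lambda>r. N (fst p) r \<omega>) {0..})) ({..<d} \<times> {1..m})"
  proof (rule indep_vars_product_index[OF indep_processes])
    fix i k assume "i \<in> {..<d}" "k \<in> {1..m}"
    then have [measurable]: "t k i \<in> {0..}" "t (k - 1) i \<in> {0..}"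
      using nonneg by auto
    show "F i k \<in> measurable (Pi\<^sub>M {0..} (\<lambda>_. count_space UNIV)) (count_space UNIV)"
      unfolding F_def by measurable
  next
    fix i assume i: "i \<in> {..<d}"
    have "indep_vars (\<lambda>_. count_space UNIV) (\<lambda>k \<omega>. N i (t k i) \<omega> - N i (t (k - 1) i) \<omega>) {1..m}"
      using i t0 step by (intro poisson_process_indep_increments_mono[OF poisson_processes]) auto
    then show "indep_vars (\<lambda>_. count_space UNIV) (\<lambda>k \<omega>. F i k (restrict (\<lambda>r. N i r \<omega>) {0..})) {1..m}"
      by (rule indep_vars_cong_space) (use i nonneg in \<open>auto simp: F_def\<close>)
  qed auto
  then have "indep_vars (\<lambda>_. count_space UNIV)
      (\<lambda>k \<omega>. \<Sum>i<d. F i k (restrict (\<lambda>r. N i r \<omega>) {0..})) {1..m}"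
    by (intro indep_vars_column_sums[of "\<lambda>i k \<omega>. F i k (restrict (\<lambda>r. N i r \<omega>) {0..})"]) auto
  then show ?thesis
  proof (rule indep_vars_cong_space)
    fix k \<omega> assume "k \<in> {1..m}" "\<omega> \<in> space M"
    then show "(\<Sum>i<d. F i k (restrict (\<lambda>r. N i r \<omega>) {0..}))
        = (\<Sum>i<d. N i (t k i) \<omega>) - (\<Sum>i<d. N i (t (k - 1) i) \<omega>)"
      using nonneg step by (subst sum_process_diff) (auto simp: F_def)
  qed
qed

lemma sum_process_mpp: "mpp d M L (\<lambda>t \<omega>. \<Sum>i<d. N i (t i) \<omega>)"
  unfolding mpp_def
proof (intro conjI allI impI)
  show "mcounting_process d M (\<lambda>t \<omega>. \<Sum>i<d. N i (t i) \<omega>)"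
    unfolding mcounting_process_def vle_def
    by (auto simp: component_zero intro!: sum_mono component_mono)
next
  fix m :: nat and t :: "nat \<Rightarrow> nat \<Rightarrow> real"
  assume "t 0 = (\<lambda>_. 0) \<and> (\<forall>k\<in>{1..m}. vlt d (t (k - 1)) (t k))"
  then show "indep_vars (\<lambda>_. count_space UNIV)
      (\<lambda>k \<omega>. (\<Sum>i<d. N i (t k i) \<omega>) - (\<Sum>i<d. N i (t (k - 1) i) \<omega>)) {1..m}"
    by (intro sum_process_indep_increments) (auto simp: vlt_def)
next
  fix s t :: "nat \<Rightarrow> real"
  assume "vle d (\<lambda>_. 0) s" "vle d s t"
  then have s: "\<And>i. i < d \<Longrightarrow> 0 \<le> s i" and st: "\<And>i. i < d \<Longrightarrow> s i \<le> t i"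
    unfolding vle_def by auto
  have "distr M (count_space UNIV) (\<lambda>\<omega>. (\<Sum>i<d. N i (t i) \<omega>) - (\<Sum>i<d. N i (s i) \<omega>))
      = distr M (count_space UNIV) (\<lambda>\<omega>. \<Sum>i<d. N i (t i) \<omega> - N i (s i) \<omega>)"
    by (intro distr_cong) (simp_all add: sum_process_diff s st)
  also have "\<dots> = distr M (count_space UNIV) (\<lambda>\<omega>. \<Sum>i<d. N i (t i - s i) \<omega>)"
  proof (rule poisson_rv_distr_eq)
    show "poisson_rv M (\<lambda>\<omega>. \<Sum>i<d. N i (t i) \<omega> - N i (s i) \<omega>) (vdot d L (\<lambda>i. t i - s i))"
      unfolding vdot_def using s st by (intro sum_process_increment_poisson)
    show "poisson_rv M (\<lambda>\<omega>. \<Sum>i<d. N i (t i - s i) \<omega>) (vdot d L (\<lambda>i. t i - s i))"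
      using st by (intro sum_process_poisson) simp
  qed
  finally show "distr M (count_space UNIV) (\<lambda>\<omega>. (\<Sum>i<d. N i (t i) \<omega>) - (\<Sum>i<d. N i (s i) \<omega>))
      = distr M (count_space UNIV) (\<lambda>\<omega>. \<Sum>i<d. N i ((\<lambda>i. t i - s i) i) \<omega>)"
    by simp
next
  fix t :: "nat \<Rightarrow> real"
  assume "vle d (\<lambda>_. 0) t"
  then show "poisson_rv M (\<lambda>\<omega>. \<Sum>i<d. N i (t i) \<omega>) (vdot d L t)"
    unfolding vle_def by (intro sum_process_poisson) auto
qed

end

end

theorem mainTheorem1:
  fixes M :: "'a measure" and d :: nat and N :: "nat \<Rightarrow> real \<Rightarrow> 'a \<Rightarrow> nat"
    and L :: "nat \<Rightarrow> real"
  assumes "prob_space M"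
    and "d \<ge> 1"
    and "\<forall>i<d. counting_process M (N i)"
    and "prob_space.indep_vars M (\<lambda>_. Pi\<^sub>M {0..} (\<lambda>_. count_space UNIV))
           (\<lambda>i \<omega>. restrict (\<lambda>t. N i t \<omega>) {0..}) {..<d}"
    and "\<forall>i<d. L i > 0"
  shows "mpp d M L (\<lambda>t \<omega>. \<Sum>i<d. N i (t i) \<omega>) \<longleftrightarrow> (\<forall>i<d. poisson_process M (L i) (N i))"
proof -
  interpret prob_space M by fact
  have "poisson_process M (L i) (N i)" if mpp: "mpp d M L (\<lambda>t \<omega>. \<Sum>i<d. N i (t i) \<omega>)" and i: "i < d"
    for i
  proof -
    have "N j 0 \<omega> = 0" if "\<omega> \<in> space M" "j < d" for j \<omega>
      using assms(3) that unfolding counting_process_def by blast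
    then have on_axis: "(\<Sum>j<d. N j (axis_point i r j) \<omega>) = N i r \<omega>" if "\<omega> \<in> space M" for r \<omega>
      using sum_axis_point[OF i, of "\<lambda>j r. N j r \<omega>"] that by simp
    show ?thesis
      using mpp_axis_poisson_process[OF mpp i] by (rule poisson_process_cong) (simp add: on_axis)
  qed
  moreover have "mpp d M L (\<lambda>t \<omega>. \<Sum>i<d. N i (t i) \<omega>)" if "\<forall>i<d. poisson_process M (L i) (N i)"
    using sum_process_mpp[OF assms(4)] that by blast
  ultimately show ?thesis
    by blast
qed

end
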